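(* Let $\mathcal C$ be a concept hierarchy, $r_1,r_2,\epsilon\in[0,1]$, $a>0$ a real with $r_1\le ar_2(1-\epsilon)$, $m$ a positive integer, and let $\mathcal L$ be the network defined below with fixed sets $F$ and $E$ satisfying the stated constraints. Then $\mathcal L$ $(r_1,r_2)$-recognizes $\mathcal C$: for every $B\subseteq C_0$ presented at time 0, (1) if $c\in supp_{r_2}(B)$ then at least $m(1-\epsilon)$ of the neurons $v\in reps(c)$ fire at time $level(c)$, and (2) if $c\notin supp_{r_1}(B)$ then no neuron $v\in reps(c)$ fires at time $level(c)$.
   Context: Concept hierarchies: fix positive integers $\ell_{max},n,k$. A universal set $D$ of concepts is partitioned into disjoint sets $D_0,\dots,D_{\ell_{max}}$ with $|D_0|=n$; $level(c)=\ell$ for $c\in D_\ell$. A concept hierarchy $\mathcal C$ consists of $C\subseteq D$, with $C_\ell=C\cap D_\ell$, and for each $c\in C_\ell$ with $1\le\ell\le\ell_{max}$ a set $children(c)\subseteq C_{\ell-1}$, such that $|C_{\ell_{max}}|=k$, $|children(c)|=k$ for all such $c$, and $children(c)\cap children(c')=\emptyset$ for distinct $c,c'\in C_\ell$. For $B\subseteq D_0$ and $r\in[0,1]$: $B(0)=B\cap C_0$; for $1\le\ell\le\ell_{max}$, $B(\ell)=\{c\in C_\ell:|children(c)\cap B(\ell-1)|\ge rk\}$; $supp_r(B)=\bigcup_{\ell}B(\ell)$. Network $\mathcal L$: neurons partitioned into layers $N_0,\dots,N_{\ell_{max}}$. Each $c\in D_0$ has a set $reps(c)$ of $m$ neurons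 in $N_0$, each $c\in C$ with $level(c)\ge1$ a set $reps(c)$ of $m$ neurons in $N_{level(c)}$, all pairwise disjoint. $E$ is a set of pairs $(u,v)$ with $v\in reps(c)$ and $u\in reps(c')$ for some child $c'$ of $c$; for $u\in N_{\ell-1}$, $v\in N_\ell$, $w(u,v)=1$ iff $(u,v)\in E$, else $0$. Threshold $\tau=ar_2km(1-\epsilon)$. A fixed set $F$ of neurons is failed (failed neurons never fire). Constraints: for every concept $c$, at least $m(1-\epsilon)$ neurons of $reps(c)$ are not in $F$; and for every $c$ with $level(c)\ge1$, every $v\in reps(c)$ and every child $c'$ of $c$, there are at least $am(1-\epsilon)$ neurons $u\in reps(c')\setminus F$ with $(u,v)\in E$. Input $B\subseteq C_0$ presented at time 0: a layer-0 neuron fires at time 0 iff it is in $\bigcup_{b\in B}reps(b)\setminus F$, and no layer-0 neuron fires at any other time. A non-failed $v\in N_\ell$, $\ell\ge1$, does not fire at time 0 and fires at time $t\ge1$ iff $\sum_{u\in N_{\ell-1}}w(u,v)x_u(t-1)\ge\tau$, where $x_u(s)\in\{0,1\}$ indicates whether $u$ fires at time $s$. *)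

theory Defs
  imports Complex_Main
begin

definition concept_hierarchy ::
  "nat \<Rightarrow> nat \<Rightarrow> nat \<Rightarrow> 'c set \<Rightarrow> ('c \<Rightarrow> nat) \<Rightarrow> 'c set \<Rightarrow> ('c \<Rightarrow> 'c set) \<Rightarrow> bool" where
  "concept_hierarchy lmax n k D level C children \<longleftrightarrow>
     lmax > 0 \<and> n > 0 \<and> k > 0 \<and>
     (\<forall>c\<in>D. level c \<le> lmax) \<and>
     finite {c\<in>D. level c = 0} \<and> card {c\<in>D. level c = 0} = n \<and>
     C \<subseteq> D \<and>
     finite {c\<in>C. level c = lmax} \<and> card {c\<in>C. level c = lmax} = k \<and>
     (\<forall>c\<in>C. 1 \<le> level c \<longrightarrow>
        children c \<subseteq> {c'\<in>C. level c' = level c - 1} \<and>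
        finite (children c) \<and> card (children c) = k) \<and>
     (\<forall>c\<in>C. \<forall>c'\<in>C. 1 \<le> level c \<and> level c' = level c \<and> c \<noteq> c' \<longrightarrow>
        children c \<inter> children c' = {})"

fun supp_level ::
  "real \<Rightarrow> nat \<Rightarrow> 'c set \<Rightarrow> ('c \<Rightarrow> nat) \<Rightarrow> ('c \<Rightarrow> 'c set) \<Rightarrow> 'c set \<Rightarrow> nat \<Rightarrow> 'c set" where
  "supp_level r k C level children B 0 = B \<inter> {c\<in>C. level c = 0}"
| "supp_level r k C level children B (Suc l) =
     {c\<in>C. level c = Suc l \<and>
        real (card (children c \<inter> supp_level r k C level children B l)) \<ge> r * real k}"

definition supp ::
  "nat \<Rightarrow> real \<Rightarrow> nat \<Rightarrow> 'c set \<Rightarrow> ('c \<Rightarrow> nat) \<Rightarrow> ('c \<Rightarrow> 'c set) \<Rightarrow> 'c set \<Rightarrow> 'c set" where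
  "supp lmax r k C level children B = (\<Union>l\<in>{0..lmax}. supp_level r k C level children B l)"

text \<open>The weighted sum
  \<open>\<Sum>u\<in>N_(l-1). w(u,v) x_u(t-1)\<close> with 0/1 weights is the number of
  layer-(l-1) neurons u with (u,v) \<in> E firing at time t-1.\<close>
fun fires ::
  "('n \<Rightarrow> nat) \<Rightarrow> ('c \<Rightarrow> 'n set) \<Rightarrow> ('n \<times> 'n) set \<Rightarrow> 'n set \<Rightarrow> real \<Rightarrow> 'c set
     \<Rightarrow> nat \<Rightarrow> 'n \<Rightarrow> bool" where
  "fires layer reps E F tau B 0 v =
     (layer v = 0 \<and> v \<notin> F \<and> v \<in> (\<Union>b\<in>B. reps b))"
| "fires layer reps E F tau B (Suc t) v =
     (layer v \<ge> 1 \<and> v \<notin> F \<and>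
      real (card {u. layer u = layer v - 1 \<and> (u, v) \<in> E \<and> fires layer reps E F tau B t u})
        \<ge> tau)"

end

theory Submission
  imports Defs
begin

text \<open>If at least \<open>r\<^sub>2 k\<close> children of \<open>c\<close>
  are supported, every non-failed representative of each of them fires, and each such child
  sends at least \<open>a m (1 - \<epsilon>)\<close> surviving edges into any \<open>v \<in> reps c\<close>; this is exactly the
  threshold. Conversely, a firing \<open>v \<in> reps c\<close> receives all its input from representatives
  of children of \<open>c\<close>, at most \<open>m\<close> per child, so at least \<open>\<tau>/m \<ge> r\<^sub>1 k\<close> children contain a
  firing neuron, and these are \<open>r\<^sub>1\<close>-supported by induction.\<close>

locale concept_network =
  fixes C concepts :: "'c set" and level :: "'c \<Rightarrow> nat" and children :: "'c \<Rightarrow> 'c set"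
    and layer :: "'n \<Rightarrow> nat" and reps :: "'c \<Rightarrow> 'n set" and E :: "('n \<times> 'n) set"
    and m :: nat
  assumes C_subset_concepts: "C \<subseteq> concepts"
    and concept_in_C: "c \<in> concepts \<Longrightarrow> 1 \<le> level c \<Longrightarrow> c \<in> C"
    and children_subset: "c \<in> C \<Longrightarrow> 1 \<le> level c \<Longrightarrow> children c \<subseteq> {c'\<in>C. level c' = level c - 1}"
    and finite_children: "c \<in> C \<Longrightarrow> 1 \<le> level c \<Longrightarrow> finite (children c)"
    and finite_reps: "c \<in> concepts \<Longrightarrow> finite (reps c)"
    and card_reps: "c \<in> concepts \<Longrightarrow> card (reps c) = m"
    and layer_reps: "c \<in> concepts \<Longrightarrow> u \<in> reps c \<Longrightarrow> layer u = level c"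
    and reps_disjoint: "c \<in> concepts \<Longrightarrow> c' \<in> concepts \<Longrightarrow> u \<in> reps c \<Longrightarrow> u \<in> reps c' \<Longrightarrow> c = c'"
    and edge_reps: "(u, v) \<in> E \<Longrightarrow> \<exists>c\<in>C. 1 \<le> level c \<and> v \<in> reps c \<and> (\<exists>c'\<in>children c. u \<in> reps c')"
begin

lemma child_in_C:
  "c \<in> C \<Longrightarrow> 1 \<le> level c \<Longrightarrow> c' \<in> children c \<Longrightarrow> c' \<in> C \<and> level c' = level c - 1"
  using children_subset by blast

lemma edge_from_child:
  assumes "(u, v) \<in> E" "c \<in> C" "1 \<le> level c" "v \<in> reps c"
  shows "\<exists>c'\<in>children c. u \<in> reps c'"
proof -
  obtain c0 c' where c0: "c0 \<in> C" "v \<in> reps c0" "c' \<in> children c0" "u \<in> reps c'"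
    using edge_reps[OF assms(1)] by blast
  have "c0 = c"
    using reps_disjoint[of c0 c v] c0 assms C_subset_concepts by blast
  with c0 show ?thesis by blast
qed

lemma finite_in_edges:
  assumes "c \<in> C" "1 \<le> level c" "v \<in> reps c"
  shows "finite {u. (u, v) \<in> E}"
proof (rule finite_subset)
  show "{u. (u, v) \<in> E} \<subseteq> (\<Union>c'\<in>children c. reps c')"
    using edge_from_child assms by blast
  show "finite (\<Union>c'\<in>children c. reps c')"
    using assms finite_children child_in_C finite_reps C_subset_concepts by blast
qed

lemma supp_level_in_C: "c \<in> supp_level r k C level children B l \<Longrightarrow> c \<in> C \<and> level c = l"
  by (cases l) auto

lemma fires_Suc_if_children_fire:
  assumes c: "c \<in> C" "level c = Suc l" and v: "v \<in> reps c - F"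
    and S: "S \<subseteq> children c"
    and S_fire: "\<And>c' u. c' \<in> S \<Longrightarrow> u \<in> reps c' - F \<Longrightarrow> fires layer reps E F \<tau> B l u"
    and in_edges: "\<And>c'. c' \<in> S \<Longrightarrow> q \<le> real (card {u\<in>reps c' - F. (u, v) \<in> E})"
    and \<tau>: "\<tau> \<le> real (card S) * q"
  shows "fires layer reps E F \<tau> B (Suc l) v"
proof -
  define U where "U = (\<Union>c'\<in>S. {u\<in>reps c' - F. (u, v) \<in> E})"
  define X where "X = {u. layer u = layer v - 1 \<and> (u, v) \<in> E \<and> fires layer reps E F \<tau> B l u}"
  have S_C: "c' \<in> concepts \<and> level c' = l" if "c' \<in> S" for c'
    using child_in_C[of c c'] that S c C_subset_concepts by auto
  have finite_S: "finite S"
    using S finite_children c by (auto intro: finite_subset)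
  have layer_v: "layer v = Suc l"
    using layer_reps c v C_subset_concepts by auto
  have "real (card U) = (\<Sum>c'\<in>S. real (card {u\<in>reps c' - F. (u, v) \<in> E}))"
    unfolding U_def
    by (subst card_UN_disjoint[OF finite_S]) (use S_C finite_reps reps_disjoint in auto)
  also have "\<dots> \<ge> real (card S) * q"
    using sum_bounded_below[of S q] in_edges by simp
  finally have "\<tau> \<le> real (card U)"
    using \<tau> by linarith
  moreover have "U \<subseteq> X"
    unfolding U_def X_def using S_fire S_C layer_reps layer_v by fastforce
  moreover have "finite X"
    unfolding X_def using finite_in_edges[OF c(1) _ DiffD1[OF v]] c by (auto intro: finite_subset)
  ultimately have "\<tau> \<le> real (card X)"
    using card_mono[of X U] by linarith
  then show ?thesis
    using layer_v v unfolding X_def by simp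
qed

lemma children_fire_if_fires_Suc:
  assumes c: "c \<in> C" "level c = Suc l" and v: "v \<in> reps c"
    and fire: "fires layer reps E F \<tau> B (Suc l) v"
  shows "\<tau> \<le> real (card {c'\<in>children c. \<exists>u\<in>reps c'. fires layer reps E F \<tau> B l u} * m)"
proof -
  define S where "S = {c'\<in>children c. \<exists>u\<in>reps c'. fires layer reps E F \<tau> B l u}"
  define X where "X = {u. layer u = layer v - 1 \<and> (u, v) \<in> E \<and> fires layer reps E F \<tau> B l u}"
  have S_C: "c' \<in> concepts" if "c' \<in> S" for c'
    using child_in_C[of c c'] that c C_subset_concepts unfolding S_def by auto
  have finite_S: "finite S"
    using finite_children c unfolding S_def by auto
  have "X \<subseteq> (\<Union>c'\<in>S. reps c')"
    unfolding X_def S_def using edge_from_child c v by fastforce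
  then have "card X \<le> card (\<Union>c'\<in>S. reps c')"
    by (rule card_mono[rotated]) (use finite_S S_C finite_reps in auto)
  also have "\<dots> \<le> (\<Sum>c'\<in>S. card (reps c'))"
    by (rule card_UN_le[OF finite_S])
  also have "\<dots> = card S * m"
    using S_C card_reps by simp
  finally have "real (card X) \<le> real (card S * m)"
    by linarith
  moreover have "\<tau> \<le> real (card X)"
    using fire unfolding X_def by simp
  ultimately show ?thesis
    unfolding S_def by linarith
qed

lemma supp_level_reps_fire:
  assumes in_edges: "\<And>c v c'. c \<in> C \<Longrightarrow> 1 \<le> level c \<Longrightarrow> v \<in> reps c \<Longrightarrow> c' \<in> children c \<Longrightarrow>
      q \<le> real (card {u\<in>reps c' - F. (u, v) \<in> E})"
    and q: "0 \<le> q" and \<tau>: "\<tau> \<le> r * real k * q"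
  shows "c \<in> supp_level r k C level children B l \<Longrightarrow> v \<in> reps c - F \<Longrightarrow>
    fires layer reps E F \<tau> B l v"
proof (induction l arbitrary: c v)
  case 0
  then show ?case
    using layer_reps C_subset_concepts by auto
next
  case (Suc l)
  define S where "S = children c \<inter> supp_level r k C level children B l"
  have c: "c \<in> C" "level c = Suc l" and supported: "r * real k \<le> real (card S)"
    using Suc.prems unfolding S_def by auto
  show ?case
  proof (rule fires_Suc_if_children_fire[OF c Suc.prems(2)])
    show "\<tau> \<le> real (card S) * q"
      using \<tau> mult_right_mono[OF supported q] by linarith
    show "S \<subseteq> children c"
      unfolding S_def by blast
    show "fires layer reps E F \<tau> B l u" if "c' \<in> S" "u \<in> reps c' - F" for c' u
      using Suc.IH that unfolding S_def by blast
    show "q \<le> real (card {u\<in>reps c' - F. (u, v) \<in> E})" if "c' \<in> S" for c'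
      using in_edges c Suc.prems(2) that unfolding S_def by auto
  qed
qed

lemma fires_in_supp_level:
  assumes B: "B \<subseteq> {c\<in>C. level c = 0}" and \<tau>: "r * real k * real m \<le> \<tau>"
  shows "c \<in> concepts \<Longrightarrow> level c = l \<Longrightarrow> v \<in> reps c \<Longrightarrow> fires layer reps E F \<tau> B l v \<Longrightarrow>
    c \<in> supp_level r k C level children B l"
proof (induction l arbitrary: c v)
  case 0
  then obtain b where "b \<in> B" "v \<in> reps b"
    by auto
  moreover have "b = c"
    using reps_disjoint[of b c v] calculation 0 B C_subset_concepts by blast
  ultimately show ?case
    using B 0 by auto
next
  case (Suc l)
  have c: "c \<in> C" "level c = Suc l"
    using Suc.prems concept_in_C by auto
  define S where "S = children c \<inter> supp_level r k C level children B l"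
  define T where "T = {c'\<in>children c. \<exists>u\<in>reps c'. fires layer reps E F \<tau> B l u}"
  have "T \<subseteq> S"
    unfolding S_def T_def using Suc.IH child_in_C[OF c(1)] c C_subset_concepts by fastforce
  then have "card T * m \<le> card S * m"
    by (intro mult_le_mono1 card_mono) (use finite_children c in \<open>auto simp: S_def\<close>)
  then have "real (card T * m) \<le> real (card S * m)"
    by (simp only: of_nat_le_iff)
  with children_fire_if_fires_Suc[OF c Suc.prems(3,4)]
  have \<tau>_le: "\<tau> \<le> real (card S) * real m"
    unfolding T_def by simp
  have "m > 0"
    using Suc.prems(1,3) finite_reps card_reps card_gt_0_iff by blast
  moreover have "r * real k * real m \<le> real (card S) * real m"
    using \<tau> \<tau>_le by linarith
  ultimately have "r * real k \<le> real (card S)"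
    by simp
  then show ?case
    using c unfolding S_def by simp
qed

lemma recognizes:
  assumes B: "B \<subseteq> {c\<in>C. level c = 0}" and level_le: "\<And>c. c \<in> concepts \<Longrightarrow> level c \<le> lmax"
    and survivors: "\<And>c. c \<in> concepts \<Longrightarrow> p \<le> real (card (reps c - F))"
    and in_edges: "\<And>c v c'. c \<in> C \<Longrightarrow> 1 \<le> level c \<Longrightarrow> v \<in> reps c \<Longrightarrow> c' \<in> children c \<Longrightarrow>
      q \<le> real (card {u\<in>reps c' - F. (u, v) \<in> E})"
    and q: "0 \<le> q" and \<tau>_upper: "\<tau> \<le> r2 * real k * q" and \<tau>_lower: "r1 * real k * real m \<le> \<tau>"
  shows "(\<forall>c\<in>supp lmax r2 k C level children B.
            p \<le> real (card {v\<in>reps c. fires layer reps E F \<tau> B (level c) v})) \<and>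
         (\<forall>c\<in>concepts. c \<notin> supp lmax r1 k C level children B \<longrightarrow>
            (\<forall>v\<in>reps c. \<not> fires layer reps E F \<tau> B (level c) v))"
proof (intro conjI ballI impI notI)
  fix c assume "c \<in> supp lmax r2 k C level children B"
  then obtain l where l: "c \<in> supp_level r2 k C level children B l"
    unfolding supp_def by blast
  then have c: "c \<in> concepts" "level c = l"
    using supp_level_in_C C_subset_concepts by blast+
  have "fires layer reps E F \<tau> B l v" if "v \<in> reps c - F" for v
    by (rule supp_level_reps_fire[OF _ q \<tau>_upper l that]) (fact in_edges)
  then have "reps c - F \<subseteq> {v\<in>reps c. fires layer reps E F \<tau> B (level c) v}"
    using c by blast
  then have "card (reps c - F) \<le> card {v\<in>reps c. fires layer reps E F \<tau> B (level c) v}"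
    by (rule card_mono[rotated]) (use finite_reps c in auto)
  then show "p \<le> real (card {v\<in>reps c. fires layer reps E F \<tau> B (level c) v})"
    using survivors[OF c(1)] by linarith
next
  fix c v assume c: "c \<in> concepts" and "c \<notin> supp lmax r1 k C level children B"
    and v: "v \<in> reps c" and fire: "fires layer reps E F \<tau> B (level c) v"
  moreover have "c \<in> supp_level r1 k C level children B (level c)"
    using fires_in_supp_level[OF B \<tau>_lower c refl v fire] .
  ultimately show False
    using level_le unfolding supp_def by auto
qed

end

lemma concept_network_of_hierarchy:
  assumes hier: "concept_hierarchy lmax n k D level C children"
    and reps0: "\<forall>c\<in>D. level c = 0 \<longrightarrow>
                   finite (reps c) \<and> card (reps c) = m \<and> (\<forall>u\<in>reps c. layer u = 0)"
    and reps1: "\<forall>c\<in>C. level c \<ge> 1 \<longrightarrow>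
                   finite (reps c) \<and> card (reps c) = m \<and> (\<forall>u\<in>reps c. layer u = level c)"
    and reps_disj: "\<forall>c\<in>{c\<in>D. level c = 0} \<union> {c\<in>C. level c \<ge> 1}.
                    \<forall>c'\<in>{c\<in>D. level c = 0} \<union> {c\<in>C. level c \<ge> 1}.
                    c \<noteq> c' \<longrightarrow> reps c \<inter> reps c' = {}"
    and E_sub: "E \<subseteq> {(u, v). \<exists>c\<in>C. \<exists>c'. level c \<ge> 1 \<and> c' \<in> children c \<and>
                                   v \<in> reps c \<and> u \<in> reps c'}"
  shows "concept_network C ({c\<in>D. level c = 0} \<union> {c\<in>C. level c \<ge> 1}) level children
    layer reps E m" (is "concept_network C ?concepts level children layer reps E m")
proof
  have "C \<subseteq> D"
    and children: "\<And>c. c \<in> C \<Longrightarrow> 1 \<le> level c \<Longrightarrow>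
      children c \<subseteq> {c'\<in>C. level c' = level c - 1} \<and> finite (children c)"
    using hier unfolding concept_hierarchy_def by blast+
  then show "C \<subseteq> ?concepts"
    by auto
  fix c c' u v
  show "c \<in> ?concepts \<Longrightarrow> 1 \<le> level c \<Longrightarrow> c \<in> C"
    by auto
  show "c \<in> C \<Longrightarrow> 1 \<le> level c \<Longrightarrow> children c \<subseteq> {c'\<in>C. level c' = level c - 1}"
    and "c \<in> C \<Longrightarrow> 1 \<le> level c \<Longrightarrow> finite (children c)"
    using children by blast+
  show "c \<in> ?concepts \<Longrightarrow> finite (reps c)"
    and "c \<in> ?concepts \<Longrightarrow> card (reps c) = m"
    and "c \<in> ?concepts \<Longrightarrow> u \<in> reps c \<Longrightarrow> layer u = level c"
    using reps0 reps1 by auto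
  show "c \<in> ?concepts \<Longrightarrow> c' \<in> ?concepts \<Longrightarrow> u \<in> reps c \<Longrightarrow> u \<in> reps c' \<Longrightarrow> c = c'"
    using reps_disj by blast
  show "(u, v) \<in> E \<Longrightarrow> \<exists>c\<in>C. 1 \<le> level c \<and> v \<in> reps c \<and> (\<exists>c'\<in>children c. u \<in> reps c')"
    using E_sub by blast
qed

theorem theorem8p5:
  fixes lmax n k m :: nat
    and D C :: "'c set" and level :: "'c \<Rightarrow> nat" and children :: "'c \<Rightarrow> 'c set"
    and layer :: "'n \<Rightarrow> nat" and reps :: "'c \<Rightarrow> 'n set"
    and E :: "('n \<times> 'n) set" and F :: "'n set"
    and r1 r2 \<epsilon> a :: real
  assumes hier: "concept_hierarchy lmax n k D level C children"
    and r1: "0 \<le> r1" "r1 \<le> 1" and r2: "0 \<le> r2" "r2 \<le> 1"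
    and eps: "0 \<le> \<epsilon>" "\<epsilon> \<le> 1"
    and a: "a > 0" and r1_le: "r1 \<le> a * r2 * (1 - \<epsilon>)"
    and m: "m > 0"
    and layers: "\<forall>u. layer u \<le> lmax"
    and reps0: "\<forall>c\<in>D. level c = 0 \<longrightarrow>
                   finite (reps c) \<and> card (reps c) = m \<and> (\<forall>u\<in>reps c. layer u = 0)"
    and reps1: "\<forall>c\<in>C. level c \<ge> 1 \<longrightarrow>
                   finite (reps c) \<and> card (reps c) = m \<and> (\<forall>u\<in>reps c. layer u = level c)"
    and reps_disj: "\<forall>c\<in>{c\<in>D. level c = 0} \<union> {c\<in>C. level c \<ge> 1}.
                    \<forall>c'\<in>{c\<in>D. level c = 0} \<union> {c\<in>C. level c \<ge> 1}.
                    c \<noteq> c' \<longrightarrow> reps c \<inter> reps c' = {}"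
    and E_sub: "E \<subseteq> {(u, v). \<exists>c\<in>C. \<exists>c'. level c \<ge> 1 \<and> c' \<in> children c \<and>
                                   v \<in> reps c \<and> u \<in> reps c'}"
    and F_reps: "\<forall>c\<in>{c\<in>D. level c = 0} \<union> {c\<in>C. level c \<ge> 1}.
                   real (card (reps c - F)) \<ge> real m * (1 - \<epsilon>)"
    and F_edges: "\<forall>c\<in>C. level c \<ge> 1 \<longrightarrow> (\<forall>v\<in>reps c. \<forall>c'\<in>children c.
                   real (card {u\<in>reps c' - F. (u, v) \<in> E}) \<ge> a * real m * (1 - \<epsilon>))"
  shows "\<forall>B. B \<subseteq> {c\<in>C. level c = 0} \<longrightarrow>
           (\<forall>c\<in>supp lmax r2 k C level children B.
              real (card {v\<in>reps c.
                 fires layer reps E F (a * r2 * real k * real m * (1 - \<epsilon>)) B (level c) v})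
                \<ge> real m * (1 - \<epsilon>)) \<and>
           (\<forall>c\<in>{c\<in>D. level c = 0} \<union> {c\<in>C. level c \<ge> 1}.
              c \<notin> supp lmax r1 k C level children B \<longrightarrow>
              (\<forall>v\<in>reps c.
                 \<not> fires layer reps E F (a * r2 * real k * real m * (1 - \<epsilon>)) B (level c) v))"
proof -
  interpret concept_network C "{c\<in>D. level c = 0} \<union> {c\<in>C. level c \<ge> 1}" level children
    layer reps E m
    using concept_network_of_hierarchy[OF hier reps0 reps1 reps_disj E_sub] .
  show ?thesis
  proof (intro allI impI recognizes)
    show "c \<in> {c\<in>D. level c = 0} \<union> {c\<in>C. level c \<ge> 1} \<Longrightarrow> level c \<le> lmax" for c
      using hier unfolding concept_hierarchy_def by blast
    show "0 \<le> a * real m * (1 - \<epsilon>)"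
      using a eps by simp
    show "a * r2 * real k * real m * (1 - \<epsilon>) \<le> r2 * real k * (a * real m * (1 - \<epsilon>))"
      by (simp add: ac_simps)
    show "r1 * real k * real m \<le> a * r2 * real k * real m * (1 - \<epsilon>)"
      using mult_right_mono[OF r1_le, of "real k * real m"] by (simp add: ac_simps)
  qed (use F_reps F_edges in auto)
qed

end
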